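(* Let $P$ be a finite set of prime numbers and let $q$ be the smallest prime not contained in $P$. Then there is a generalized Euclid sequence with seed $P$ that contains $q$.
   Context: Given a finite set $\{p_1,\ldots,p_k\}$ of distinct primes, for any $I\subseteq\{1,\ldots,k\}$ put $N_I=\prod_{i\in I}p_i+\prod_{i\in\{1,\ldots,k\}\setminus I}p_i$ (empty products equal $1$); $N_I>1$ is coprime to $p_1\cdots p_k$. A generalized Euclid sequence with seed $\{p_1,\ldots,p_k\}$ is an infinite sequence of primes $p_1,p_2,\ldots$ beginning with the seed primes (in some order) such that for every $j\ge k$, $p_{j+1}$ is a prime factor of $N_I$ for some $I\subseteq\{1,\ldots,j\}$ (formed with $p_1,\ldots,p_j$). Equivalently, $p_{j+1}$ is a prime divisor of $d+n/d$ for some positive divisor $d$ of $n=p_1\cdots p_j$. *)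

theory Defs
  imports "HOL-Computational_Algebra.Primes"
begin

definition gen_euclid_seq :: "nat set \<Rightarrow> (nat \<Rightarrow> nat) \<Rightarrow> bool" where
  "gen_euclid_seq P p \<longleftrightarrow>
     finite P \<and> (\<forall>r\<in>P. prime r) \<and>
     p ` {..<card P} = P \<and>
     (\<forall>j. prime (p j)) \<and>
     (\<forall>j\<ge>card P. \<exists>d. d dvd (\<Prod>i<j. p i) \<and> p j dvd (d + (\<Prod>i<j. p i) div d))"

end

theory Submission
  imports Defs "HOL-Number_Theory.Number_Theory"
begin

text \<open>
  Start from \<open>n = \<Prod>P\<close>: every prime below \<open>q\<close> divides \<open>n\<close> and \<open>q\<close> does not. Appending a prime
  factor \<open>r\<close> of some \<open>d + n/d\<close> replaces \<open>n\<close> by \<open>n r\<close> and multiplies the set \<open>T\<close> of residues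
  mod \<open>q\<close> of divisors of \<open>n\<close> by \<open>r\<close>. Since \<open>d + n/d \<equiv> d' + n/d'\<close> forces \<open>d' \<equiv> d\<close> or
  \<open>d' \<equiv> n/d\<close>, the values \<open>d + n/d\<close> occupy at least \<open>|T|/2\<close> residues. Hence they cannot all lie in
  the stabiliser \<open>M\<close> of \<open>T\<close> unless \<open>|T| \<le> 2 |M|\<close>, which is impossible while \<open>T\<close> is not the whole
  unit group, because \<open>T\<close> contains all primes below \<open>q\<close> and their pairwise products. So some prime
  factor outside \<open>M\<close> enlarges \<open>T\<close>, or equals \<open>q\<close>.

  Once \<open>T\<close> is the whole unit group, \<open>q\<close> divides \<open>d + n/d\<close> for \<open>d \<equiv> \<surd>(-n)\<close> if \<open>-n\<close> is a square.
  Otherwise a non-square prime factor \<open>r\<close> of some \<open>d + n/d\<close> makes \<open>-n r\<close> a square; if there is none,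
  all values are squares, and a prime factor that is a square but not a fourth power leads, after
  one more step, to a value that is a non-square.
\<close>

section \<open>Euclid chains and Euclid sequences\<close>

fun euclid_chain :: "nat \<Rightarrow> nat list \<Rightarrow> bool" where
  "euclid_chain n [] \<longleftrightarrow> True"
| "euclid_chain n (r # rs) \<longleftrightarrow>
     prime r \<and> (\<exists>d. d dvd n \<and> r dvd d + n div d) \<and> euclid_chain (n * r) rs"

lemma euclid_chain_prime: "euclid_chain n rs \<Longrightarrow> r \<in> set rs \<Longrightarrow> prime r"
  by (induction rs arbitrary: n) auto

lemma euclid_chain_nth:
  assumes "euclid_chain n rs" "i < length rs"
  shows "\<exists>d. d dvd n * prod_list (take i rs) \<and> rs ! i dvd d + n * prod_list (take i rs) div d"
  using assms
proof (induction rs arbitrary: n i)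
  case (Cons r rs)
  show ?case
  proof (cases i)
    case (Suc k)
    with Cons.prems Cons.IH[of "n * r" k] show ?thesis by (auto simp: mult.assoc)
  qed (use Cons.prems in auto)
qed simp

definition least_prime_factor :: "nat \<Rightarrow> nat" where
  "least_prime_factor m = (LEAST r. prime r \<and> r dvd m)"

lemma least_prime_factor: "m \<noteq> 1 \<Longrightarrow> prime (least_prime_factor m) \<and> least_prime_factor m dvd m"
  unfolding least_prime_factor_def by (rule LeastI_ex) (use prime_factor_nat in blast)

function euclid_completion :: "nat list \<Rightarrow> nat \<Rightarrow> nat" where
  "euclid_completion L j =
     (if j < length L then L ! j
      else least_prime_factor (1 + (\<Prod>i<j. euclid_completion L i)))"
  by auto
termination by (relation "measure snd") auto

declare euclid_completion.simps [simp del]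

lemma euclid_completion_prefix: "j < length L \<Longrightarrow> euclid_completion L j = L ! j"
  by (simp add: euclid_completion.simps)

lemma euclid_completion_prime:
  assumes "\<forall>r\<in>set L. prime r"
  shows "prime (euclid_completion L j)"
proof (induction j rule: less_induct)
  case (less j)
  have "(\<Prod>i<j. euclid_completion L i) > 0"
    using less.IH by (simp add: prime_gt_0_nat prod_pos)
  then show ?case
    using assms least_prime_factor [of "1 + (\<Prod>i<j. euclid_completion L i)"]
    by (subst euclid_completion.simps) auto
qed

lemma euclid_completion_tail:
  assumes "\<forall>r\<in>set L. prime r" "length L \<le> j"
  shows "euclid_completion L j dvd 1 + (\<Prod>i<j. euclid_completion L i)"
proof -
  have "(\<Prod>i<j. euclid_completion L i) > 0"
    using euclid_completion_prime [OF assms(1)] by (simp add: prime_gt_0_nat prod_pos)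
  then show ?thesis
    using assms(2) least_prime_factor [of "1 + (\<Prod>i<j. euclid_completion L i)"]
    by (subst euclid_completion.simps) auto
qed

lemma euclid_completion_mem:
  assumes "x \<in> set L"
  shows "\<exists>j. euclid_completion L j = x"
proof -
  obtain j where "j < length L" "L ! j = x"
    using assms unfolding in_set_conv_nth by blast
  then show ?thesis
    by (intro exI [of _ j]) (simp add: euclid_completion_prefix)
qed

lemma prod_list_take_eq_prod: "j \<le> length L \<Longrightarrow> prod_list (take j L) = (\<Prod>i<j. L ! i :: nat)"
  by (simp add: prod.list_conv_set_nth lessThan_atLeast0)

lemma prod_list_sorted_list_of_set: "finite P \<Longrightarrow> prod_list (sorted_list_of_set P) = \<Prod>P"
  using prod.distinct_set_conv_list[of "sorted_list_of_set P" id] by simp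

lemma euclid_completion_gen_euclid_seq:
  assumes P: "finite P" "\<forall>r\<in>P. prime r" and chain: "euclid_chain (\<Prod>P) rs"
  shows "gen_euclid_seq P (euclid_completion (sorted_list_of_set P @ rs))"
proof -
  define ps where "ps = sorted_list_of_set P"
  define p where "p = euclid_completion (ps @ rs)"
  have primes: "\<forall>r\<in>set (ps @ rs). prime r"
    using P euclid_chain_prime[OF chain] by (auto simp: ps_def)
  have prefix: "j < length (ps @ rs) \<Longrightarrow> p j = (ps @ rs) ! j" for j
    by (simp add: p_def euclid_completion_prefix)
  have "p ` {..<card P} = (!) ps ` {..<length ps}"
    using prefix by (auto simp: ps_def nth_append)
  also have "\<dots> = set ps"
    by (auto simp: in_set_conv_nth)
  also have "\<dots> = P"
    using P(1) by (simp add: ps_def)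
  finally have seed: "p ` {..<card P} = P" .
  have "\<exists>d. d dvd (\<Prod>i<j. p i) \<and> p j dvd d + (\<Prod>i<j. p i) div d" if j: "card P \<le> j" for j
  proof (cases "j < length (ps @ rs)")
    case True
    define k where "k = j - length ps"
    have k: "j = length ps + k" "k < length rs"
      using j True by (auto simp: k_def ps_def)
    have "(\<Prod>i<j. p i) = (\<Prod>i<j. (ps @ rs) ! i)"
      using True prefix by (intro prod.cong) auto
    also have "\<dots> = prod_list (take j (ps @ rs))"
      using True by (simp only: prod_list_take_eq_prod less_imp_le)
    also have "\<dots> = \<Prod>P * prod_list (take k rs)"
      using P(1) by (simp add: k(1) ps_def prod_list_sorted_list_of_set)
    finally have "(\<Prod>i<j. p i) = \<Prod>P * prod_list (take k rs)" .
    moreover have "p j = rs ! k"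
      using prefix[OF True] by (simp add: k(1) nth_append)
    ultimately show ?thesis
      using euclid_chain_nth[OF chain k(2)] by simp
  next
    case False
    then show ?thesis
      using euclid_completion_tail[OF primes] by (intro exI[of _ 1]) (simp add: p_def)
  qed
  then show ?thesis
    using P seed euclid_completion_prime[OF primes]
    unfolding gen_euclid_seq_def p_def ps_def by blast
qed

section \<open>Residues modulo a prime\<close>

locale prime_modulus =
  fixes q :: nat
  assumes prime_q: "prime q"
begin

abbreviation mult_mod :: "nat \<Rightarrow> nat \<Rightarrow> nat" (infixl \<open>\<odot>\<close> 70)
  where "a \<odot> b \<equiv> (a * b) mod q"

definition reachable :: "nat \<Rightarrow> bool" where
  "reachable n \<longleftrightarrow> (\<exists>rs. euclid_chain n rs \<and> q \<in> set rs)"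

lemma reachableI: "d dvd n \<Longrightarrow> q dvd d + n div d \<Longrightarrow> reachable n"
  unfolding reachable_def using prime_q by (intro exI[of _ "[q]"]) auto

lemma reachable_mult:
  assumes "reachable (n * r)" "prime r" "d dvd n" "r dvd d + n div d"
  shows "reachable n"
proof -
  obtain rs where "euclid_chain (n * r) rs" "q \<in> set rs"
    using assms(1) unfolding reachable_def by blast
  with assms(2-) show ?thesis
    unfolding reachable_def by (intro exI[of _ "r # rs"]) auto
qed

lemma two_le_q: "2 \<le> q"
  using prime_q prime_ge_2_nat by blast

text \<open>The unit group of \<open>\<int>/q\<close> is represented by \<open>{1..<q}\<close> with multiplication \<open>\<odot>\<close>.\<close>

definition unit_residues :: "nat set" where
  "unit_residues = {1..<q}"

lemma finite_unit_residues [simp]: "finite unit_residues"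
  by (simp add: unit_residues_def)

lemma card_unit_residues: "card unit_residues = q - 1"
  by (simp add: unit_residues_def)

lemma unit_residues_iff: "x \<in> unit_residues \<longleftrightarrow> 0 < x \<and> x < q"
  by (auto simp: unit_residues_def)

lemma one_in_unit_residues [simp]: "1 \<in> unit_residues"
  using two_le_q by (simp add: unit_residues_iff)

lemma unit_residue_mod [simp]: "x \<in> unit_residues \<Longrightarrow> x mod q = x"
  by (simp add: unit_residues_iff)

lemma mod_in_unit_residues_iff: "x mod q \<in> unit_residues \<longleftrightarrow> \<not> q dvd x"
  using two_le_q by (auto simp: unit_residues_iff mod_eq_0_iff_dvd [symmetric])

lemma unit_residue_not_dvd: "x \<in> unit_residues \<Longrightarrow> \<not> q dvd x"
  using mod_in_unit_residues_iff [of x] by simp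

lemma not_dvd_mult: "\<not> q dvd a \<Longrightarrow> \<not> q dvd b \<Longrightarrow> \<not> q dvd a * b"
  using prime_dvd_mult_iff [OF prime_q] by blast

lemma mult_mod_in_unit_residues:
  "a \<in> unit_residues \<Longrightarrow> b \<in> unit_residues \<Longrightarrow> a \<odot> b \<in> unit_residues"
  using not_dvd_mult unit_residue_not_dvd mod_in_unit_residues_iff by blast

lemma mult_mod_assoc: "a \<odot> b \<odot> c = a \<odot> (b \<odot> c)"
  by (simp add: mod_mult_left_eq mod_mult_right_eq mult.assoc)

lemma mult_mod_cancel:
  assumes "\<not> q dvd k" "k \<odot> a = k \<odot> b"
  shows "a mod q = b mod q"
proof -
  have "coprime k q"
    using assms(1) prime_imp_coprime [OF prime_q] coprime_commute by blast
  then show ?thesis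
    using assms(2) cong_mult_lcancel_nat unfolding cong_def by blast
qed

lemma inj_on_mult_mod:
  assumes "k \<in> unit_residues" "A \<subseteq> unit_residues"
  shows "inj_on ((\<odot>) k) A"
proof (rule inj_onI)
  fix a b assume "a \<in> A" "b \<in> A" "k \<odot> a = k \<odot> b"
  then have "a mod q = b mod q"
    using mult_mod_cancel unit_residue_not_dvd assms(1) by blast
  moreover have "a \<in> unit_residues" "b \<in> unit_residues"
    using \<open>a \<in> A\<close> \<open>b \<in> A\<close> assms(2) by auto
  ultimately show "a = b"
    by simp
qed

lemma minus_one_squared: "(q - 1) \<odot> (q - 1) = 1"
proof -
  have "(q - 1) * (q - 1) = 1 + (q - 2) * q"
    using two_le_q by (cases q) (auto simp: algebra_simps)
  then have "(q - 1) \<odot> (q - 1) = 1 mod q"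
    by (simp only: mod_mult_self1)
  then show ?thesis
    using two_le_q by simp
qed

text \<open>Closure under \<open>\<odot>\<close> suffices: a finite submonoid of a group is a subgroup.\<close>

definition unit_subgroup :: "nat set \<Rightarrow> bool" where
  "unit_subgroup M \<longleftrightarrow> M \<subseteq> unit_residues \<and> 1 \<in> M \<and> (\<forall>a\<in>M. \<forall>b\<in>M. a \<odot> b \<in> M)"

lemma unit_subgroup_mod_mem:
  assumes M: "unit_subgroup M" and "0 < N" and factors: "\<And>r. prime r \<Longrightarrow> r dvd N \<Longrightarrow> r mod q \<in> M"
  shows "N mod q \<in> M"
  using assms(2,3)
proof (induction N rule: prime_divisors_induct)
  case (factor p x)
  then have "p mod q \<in> M" "x mod q \<in> M"
    by auto
  then have "p mod q \<odot> (x mod q) \<in> M"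
    using M unfolding unit_subgroup_def by blast
  then show ?case
    by (simp add: mod_mult_eq)
qed (use M two_le_q in \<open>auto simp: unit_subgroup_def\<close>)

lemma unit_subgroup_prime_factor:
  assumes "unit_subgroup M" "0 < N" "N mod q \<notin> M"
  obtains r where "prime r" "r dvd N" "r mod q \<notin> M"
  using unit_subgroup_mod_mem assms by blast

lemma unit_subgroup_contains_units_avoiding:
  assumes M: "unit_subgroup M" and primes: "\<And>p. prime p \<Longrightarrow> p < q \<Longrightarrow> p \<noteq> p0 \<Longrightarrow> p \<in> M"
    and x: "x \<in> unit_residues" "\<not> p0 dvd x"
  shows "x \<in> M"
proof -
  have "r mod q \<in> M" if "prime r" "r dvd x" for r
  proof -
    have "r < q" "r \<noteq> p0"
      using that x dvd_imp_le [of r x] by (auto simp: unit_residues_iff)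
    then show ?thesis
      using primes that(1) by simp
  qed
  then show ?thesis
    using unit_subgroup_mod_mem [OF M, of x] x by (simp add: unit_residues_iff)
qed

lemma unit_subgroup_eq_if_primes:
  assumes "unit_subgroup M" "\<And>p. prime p \<Longrightarrow> p < q \<Longrightarrow> p \<in> M"
  shows "M = unit_residues"
  using assms unit_subgroup_contains_units_avoiding [of M q] unit_residue_not_dvd
  unfolding unit_subgroup_def by blast

lemma unit_subgroup_cancel:
  assumes M: "unit_subgroup M" and "x \<in> unit_residues" "m \<in> M" "x \<odot> m \<in> M"
  shows "x \<in> M"
proof -
  have sub: "M \<subseteq> unit_residues" and closed: "\<And>a b. a \<in> M \<Longrightarrow> b \<in> M \<Longrightarrow> a \<odot> b \<in> M"
    using M unfolding unit_subgroup_def by auto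
  have "inj_on ((\<odot>) m) M"
    using inj_on_mult_mod sub \<open>m \<in> M\<close> by blast
  then have "(\<odot>) m ` M = M"
    using closed \<open>m \<in> M\<close> finite_subset [OF sub] by (intro endo_inj_surj) auto
  moreover have "1 \<in> M"
    using M unfolding unit_subgroup_def by blast
  ultimately have "1 \<in> (\<odot>) m ` M"
    by simp
  then obtain m' where "1 = m \<odot> m'" "m' \<in> M"
    by (rule imageE)
  then have "x = x \<odot> m \<odot> m'"
    using assms(2) by (simp add: mult_mod_assoc flip: \<open>1 = m \<odot> m'\<close>)
  then show ?thesis
    using closed [OF assms(4) \<open>m' \<in> M\<close>] by simp
qed

lemma minus_one_mult_mod_minus:
  assumes "x < q"
  shows "(q - 1) \<odot> (q - x) = x"
proof -
  obtain s where "q = x + s + 1"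
    using assms less_imp_Suc_add by fastforce
  then have "(q - 1) * (q - x) = x + (q - x - 1) * q"
    by (simp add: algebra_simps)
  then show ?thesis
    using assms by (simp only: mod_mult_self1) simp
qed

text \<open>\<open>2 \<equiv> (2 y) / y\<close> for an odd \<open>y\<close> with \<open>2 y mod q \<in> {1, 3}\<close>.\<close>

lemma unit_subgroup_contains_two:
  assumes M: "unit_subgroup M" and q: "5 \<le> q"
    and odd_units: "\<And>x. x \<in> unit_residues \<Longrightarrow> odd x \<Longrightarrow> x \<in> M"
  shows "2 \<in> M"
proof -
  obtain k where k: "q = 2 * k + 1"
    using prime_odd_nat [OF prime_q] q oddE by fastforce
  obtain y where y: "y \<in> unit_residues" "odd y" "2 \<odot> y \<in> {1, 3}"
  proof (cases "odd (k + 1)")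
    case True
    have "2 * (k + 1) = 1 + q"
      using k by simp
    then have "2 \<odot> (k + 1) = 1 mod q"
      by (simp only: mod_add_self2)
    then show ?thesis
      using that [of "k + 1"] True k q unfolding unit_residues_iff by auto
  next
    case False
    have "2 * (k + 2) = 3 + q"
      using k by simp
    then have "2 \<odot> (k + 2) = 3 mod q"
      by (simp only: mod_add_self2)
    then show ?thesis
      using that [of "k + 2"] False k q unfolding unit_residues_iff by auto
  qed
  have "2 \<odot> y \<in> M" "y \<in> M"
    using y q by (auto intro!: odd_units simp: unit_residues_iff)
  then show ?thesis
    using unit_subgroup_cancel [OF M, of 2 y] q by (simp add: unit_residues_iff mult.commute)
qed

text \<open>\<open>p\<^sub>0 \<equiv> (-1) (-p\<^sub>0)\<close>, where \<open>-1 \<equiv> (-2) / 2\<close> in case \<open>p\<^sub>0\<close> divides \<open>q - 1\<close>.\<close>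

lemma unit_subgroup_contains_odd_prime:
  assumes M: "unit_subgroup M" and p0: "prime p0" "3 \<le> p0" "p0 < q"
    and avoiding: "\<And>x. x \<in> unit_residues \<Longrightarrow> \<not> p0 dvd x \<Longrightarrow> x \<in> M"
  shows "p0 \<in> M"
proof -
  have "2 \<in> M"
    using p0 by (intro avoiding) (auto simp: unit_residues_iff dest: dvd_imp_le)
  have "q - 1 \<in> M"
  proof (cases "p0 dvd q - 1")
    case True
    then have "\<not> p0 dvd q - 2"
      using p0 dvd_diff_nat [of p0 "q - 1" "q - 2"] by auto
    then have "q - 2 \<in> M"
      using p0 by (intro avoiding) (auto simp: unit_residues_iff)
    moreover have "(q - 1) \<odot> 2 = q - 2"
      using minus_one_mult_mod_minus [of "q - 2"] p0 by simp
    ultimately show ?thesis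
      using unit_subgroup_cancel [OF M _ \<open>2 \<in> M\<close>] p0 by (simp add: unit_residues_iff)
  next
    case False
    then show ?thesis
      using p0 by (intro avoiding) (auto simp: unit_residues_iff)
  qed
  moreover have "\<not> p0 dvd q - p0"
  proof
    assume "p0 dvd q - p0"
    then have "p0 dvd (q - p0) + p0"
      by simp
    then have "p0 dvd q"
      using p0(3) by simp
    then show False
      using p0 prime_q primes_dvd_imp_eq by blast
  qed
  then have "q - p0 \<in> M"
    using p0 by (intro avoiding) (auto simp: unit_residues_iff)
  ultimately have "(q - 1) \<odot> (q - p0) \<in> M"
    using M unfolding unit_subgroup_def by blast
  then show ?thesis
    using minus_one_mult_mod_minus [OF p0(3)] by simp
qed

lemma unit_subgroup_contains_prime:
  assumes M: "unit_subgroup M" and q: "5 \<le> q" and p0: "prime p0" "p0 < q"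
    and avoiding: "\<And>x. x \<in> unit_residues \<Longrightarrow> \<not> p0 dvd x \<Longrightarrow> x \<in> M"
  shows "p0 \<in> M"
proof (cases "p0 = 2")
  case True
  then show ?thesis
    using unit_subgroup_contains_two [OF M q] avoiding by auto
next
  case False
  then have "3 \<le> p0"
    using prime_ge_2_nat [OF p0(1)] by linarith
  then show ?thesis
    using unit_subgroup_contains_odd_prime [OF M p0(1) _ p0(2) avoiding] by blast
qed

section \<open>Stabilisers\<close>

definition stabiliser :: "nat set \<Rightarrow> nat set" where
  "stabiliser A = {x \<in> unit_residues. \<forall>t\<in>A. x \<odot> t \<in> A}"

lemma unit_subgroup_stabiliser:
  assumes "A \<subseteq> unit_residues"
  shows "unit_subgroup (stabiliser A)"
  unfolding unit_subgroup_def
proof (intro conjI ballI)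
  show "1 \<in> stabiliser A"
    using assms two_le_q by (auto simp: stabiliser_def unit_residues_iff)
next
  fix a b assume "a \<in> stabiliser A" "b \<in> stabiliser A"
  then show "a \<odot> b \<in> stabiliser A"
    by (auto simp: stabiliser_def mult_mod_assoc mult_mod_in_unit_residues)
qed (auto simp: stabiliser_def)

lemma stabiliser_subset: "1 \<in> A \<Longrightarrow> stabiliser A \<subseteq> A"
  by (auto simp: stabiliser_def)

lemma stabiliser_coset:
  assumes A: "A \<subseteq> unit_residues" "1 \<in> A" and card: "card A \<le> 2 * card (stabiliser A)"
    and u: "u \<in> A - stabiliser A"
  shows "(\<odot>) u ` stabiliser A = A - stabiliser A"
proof -
  define M where "M = stabiliser A"
  have M: "unit_subgroup M" "M \<subseteq> A"
    using unit_subgroup_stabiliser stabiliser_subset A by (auto simp: M_def)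
  have u_unit: "u \<in> unit_residues"
    using u A by auto
  have sub: "(\<odot>) u ` M \<subseteq> A - M"
  proof
    fix y assume "y \<in> (\<odot>) u ` M"
    then obtain m where m: "m \<in> M" "y = u \<odot> m"
      by blast
    then have "y \<in> A"
      using u by (auto simp: M_def stabiliser_def mult.commute)
    moreover have "y \<notin> M"
      using unit_subgroup_cancel [OF M(1) u_unit m(1)] m u by (auto simp: M_def mult.commute)
    ultimately show "y \<in> A - M"
      by blast
  qed
  have "inj_on ((\<odot>) u) M"
    using inj_on_mult_mod u_unit M unfolding unit_subgroup_def by blast
  then have "card ((\<odot>) u ` M) = card M"
    by (rule card_image)
  moreover have "finite A" "finite M"
    using finite_subset [OF A(1)] finite_subset [OF M(2)] by auto
  then have "card (A - M) \<le> card M"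
    using card card_Diff_subset [of M A] card_mono [of A M] M(2) by (simp add: M_def)
  moreover have "finite (A - M)"
    using \<open>finite A\<close> by simp
  ultimately show ?thesis
    using card_subset_eq [OF _ sub] card_mono [OF _ sub] unfolding M_def by (metis le_antisym)
qed

lemma stabiliser_index_two_closed:
  assumes A: "A \<subseteq> unit_residues" "1 \<in> A" and card: "card A \<le> 2 * card (stabiliser A)"
    and a: "a \<in> A - stabiliser A" and b: "b \<in> A - stabiliser A" and ab: "a \<odot> b \<in> A"
  shows "\<forall>x\<in>A. \<forall>y\<in>A. x \<odot> y \<in> A"
proof -
  define M where "M = stabiliser A"
  have M: "unit_subgroup M" "M \<subseteq> A"
    using unit_subgroup_stabiliser stabiliser_subset A by (auto simp: M_def)
  have cosets: "(\<odot>) a ` M = A - M" "(\<odot>) b ` M = A - M"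
    using stabiliser_coset [OF A card] a b by (simp_all add: M_def)
  have "a \<odot> b \<in> M"
  proof (rule ccontr)
    assume "a \<odot> b \<notin> M"
    then have "a \<odot> b \<in> (\<odot>) a ` M"
      using ab cosets(1) by blast
    then obtain m where "a \<odot> b = a \<odot> m" "m \<in> M"
      by (rule imageE)
    moreover have "a \<in> unit_residues" "b \<in> unit_residues" "m \<in> unit_residues"
      using a b A(1) M \<open>m \<in> M\<close> by (auto simp: unit_subgroup_def)
    ultimately have "b = m"
      using mult_mod_cancel [of a b m] unit_residue_not_dvd by auto
    then show False
      using \<open>m \<in> M\<close> b by (simp add: M_def)
  qed
  show ?thesis
  proof (intro ballI)
    fix x y assume xy: "x \<in> A" "y \<in> A"
    consider "x \<in> M" | "y \<in> M" | "x \<in> A - M" "y \<in> A - M"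
      using xy by blast
    then show "x \<odot> y \<in> A"
    proof cases
      case 3
      then have "x \<in> (\<odot>) a ` M" "y \<in> (\<odot>) b ` M"
        using cosets by auto
      then obtain m m' where m: "m \<in> M" "m' \<in> M" "x = a \<odot> m" "y = b \<odot> m'"
        by (auto elim!: imageE)
      have "x \<odot> y = (a * m * (b * m')) mod q"
        unfolding m(3,4) by (rule mod_mult_eq)
      also have "\<dots> = (a * b * (m * m')) mod q"
        by (simp add: ac_simps)
      also have "\<dots> = a \<odot> b \<odot> (m \<odot> m')"
        by (rule mod_mult_eq [symmetric])
      finally show ?thesis
        using M \<open>a \<odot> b \<in> M\<close> m(1,2) unfolding unit_subgroup_def by auto
    qed (use xy in \<open>auto simp: M_def stabiliser_def mult.commute\<close>)
  qed
qed

text \<open>If \<open>|A| \<le> 2 |M|\<close> for the stabiliser \<open>M\<close>, then \<open>A\<close> is at most two cosets of \<open>M\<close> and, not being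
  closed, has at most one prime \<open>p\<^sub>0 < q\<close> outside \<open>M\<close>; but then \<open>M\<close> contains all units prime to
  \<open>p\<^sub>0\<close>, hence \<open>p\<^sub>0\<close>.\<close>

lemma twice_card_stabiliser_less:
  assumes A: "A \<subseteq> unit_residues" "1 \<in> A" "A \<noteq> unit_residues"
    and primes: "\<And>p. prime p \<Longrightarrow> p < q \<Longrightarrow> p \<in> A"
    and products: "\<And>p p'. prime p \<Longrightarrow> prime p' \<Longrightarrow> p < q \<Longrightarrow> p' < q \<Longrightarrow> p \<noteq> p' \<Longrightarrow> p \<odot> p' \<in> A"
  shows "2 * card (stabiliser A) < card A"
proof (rule ccontr)
  assume "\<not> ?thesis"
  then have card: "card A \<le> 2 * card (stabiliser A)"
    by simp
  define M where "M = stabiliser A"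
  have M: "unit_subgroup M" "M \<subseteq> A"
    using unit_subgroup_stabiliser stabiliser_subset A by (auto simp: M_def)
  have not_closed: "\<not> (\<forall>x\<in>A. \<forall>y\<in>A. x \<odot> y \<in> A)"
    using unit_subgroup_eq_if_primes [of A] A primes unfolding unit_subgroup_def by blast
  obtain p0 where p0: "prime p0" "p0 < q" "p0 \<notin> M"
    using unit_subgroup_eq_if_primes [OF M(1)] M(2) A(3) A(1) by blast
  have others: "p \<in> M" if "prime p" "p < q" "p \<noteq> p0" for p
  proof (rule ccontr)
    assume "p \<notin> M"
    then show False
      using stabiliser_index_two_closed [OF A(1,2) card, of p p0] not_closed
        primes products that p0 by (simp add: M_def)
  qed
  have avoiding: "x \<in> M" if "x \<in> unit_residues" "\<not> p0 dvd x" for x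
    using unit_subgroup_contains_units_avoiding [OF M(1) others that] by blast
  have "5 \<le> q"
  proof (rule ccontr)
    assume "\<not> 5 \<le> q"
    then have "q \<le> 3"
      using prime_odd_nat [OF prime_q] by (cases "q = 4") auto
    then have "unit_residues \<subseteq> {1, 2}" "2 < q \<Longrightarrow> 2 \<in> A"
      using primes by (auto simp: unit_residues_iff)
    then have "unit_residues \<subseteq> A"
      using A(2) by (auto simp: unit_residues_iff)
    then show False
      using A(1,3) by blast
  qed
  then show False
    using unit_subgroup_contains_prime [OF M(1) _ p0(1,2) avoiding] p0(3) by blast
qed

section \<open>Residues of divisors\<close>

definition divisor_residues :: "nat \<Rightarrow> nat set" where
  "divisor_residues n = (\<lambda>d. d mod q) ` {d. d dvd n}"

lemma divisor_residuesE:
  assumes "t \<in> divisor_residues n"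
  obtains d where "d dvd n" "d mod q = t"
  using assms unfolding divisor_residues_def by blast

lemma divisor_pos: "\<not> q dvd n \<Longrightarrow> d dvd n \<Longrightarrow> 0 < d"
  using dvd_pos_nat [of n d] by (cases "n = 0") auto

lemma divisor_residues_subset: "\<not> q dvd n \<Longrightarrow> divisor_residues n \<subseteq> unit_residues"
  unfolding divisor_residues_def using mod_in_unit_residues_iff dvd_trans by blast

lemma finite_divisor_residues: "finite (divisor_residues n)"
proof (rule finite_subset)
  show "divisor_residues n \<subseteq> {..<q}"
    using two_le_q by (auto simp: divisor_residues_def)
qed simp

lemma one_in_divisor_residues: "1 \<in> divisor_residues n"
  using two_le_q unfolding divisor_residues_def by (intro image_eqI [of _ _ 1]) auto

lemma prime_in_divisor_residues: "p dvd n \<Longrightarrow> p < q \<Longrightarrow> p \<in> divisor_residues n"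
  unfolding divisor_residues_def by (intro image_eqI [of _ _ p]) auto

lemma product_in_divisor_residues:
  assumes "prime p" "prime p'" "p \<noteq> p'" "p dvd n" "p' dvd n"
  shows "p \<odot> p' \<in> divisor_residues n"
proof -
  have "p * p' dvd n"
    using assms primes_coprime divides_mult by blast
  then show ?thesis
    unfolding divisor_residues_def by blast
qed

lemma divisor_residues_mono: "divisor_residues n \<subseteq> divisor_residues (n * r)"
  unfolding divisor_residues_def by auto

lemma divisor_residues_mult:
  assumes "t \<in> divisor_residues n"
  shows "r mod q \<odot> t \<in> divisor_residues (n * r)"
proof -
  obtain d where "d dvd n" "t = d mod q"
    using assms unfolding divisor_residues_def by blast
  moreover have "r * d dvd n * r"
    using \<open>d dvd n\<close> by (simp add: mult.commute mult_dvd_mono)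
  ultimately show ?thesis
    unfolding divisor_residues_def by (auto simp: mod_mult_eq)
qed

lemma divisor_residues_psubset:
  assumes "\<not> q dvd n" "prime r" "r \<noteq> q" "r mod q \<notin> stabiliser (divisor_residues n)"
  shows "divisor_residues n \<subset> divisor_residues (n * r)"
proof -
  have "r mod q \<in> unit_residues"
    using assms(2,3) prime_q primes_dvd_imp_eq mod_in_unit_residues_iff by blast
  then obtain t where "t \<in> divisor_residues n" "r mod q \<odot> t \<notin> divisor_residues n"
    using assms(4) unfolding stabiliser_def by blast
  then show ?thesis
    using divisor_residues_mono divisor_residues_mult by blast
qed

text \<open>Multiplied by \<open>d d'\<close>, the difference of the two values factors as \<open>(d - d') (d d' - n)\<close>.\<close>

lemma euclid_value_collision:
  assumes n: "\<not> q dvd n" and d: "d dvd n" "d' dvd n"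
    and eq: "(d + n div d) mod q = (d' + n div d') mod q"
  shows "d' mod q = d mod q \<or> d' mod q = (n div d) mod q"
proof -
  define e e' where "e = n div d" and "e' = n div d'"
  have de: "int d * int e = int n" "int d' * int e' = int n"
    using d by (simp_all add: e_def e'_def flip: of_nat_mult)
  have "int q dvd (int d + int e) - (int d' + int e')"
    using eq by (simp add: e_def e'_def cong_iff_dvd_diff flip: cong_int_iff cong_def)
  then have "int q dvd int d * int d' * ((int d + int e) - (int d' + int e'))"
    by simp
  also have "int d * int d' * ((int d + int e) - (int d' + int e')) = int d * ((int d - int d') * (int d' - int e))"
    using de by (simp add: algebra_simps)
  finally have "int q dvd int d * ((int d - int d') * (int d' - int e))" .
  moreover have "\<not> int q dvd int d"
    using n d(1) dvd_trans by auto
  ultimately have "int q dvd int d - int d' \<or> int q dvd int d' - int e"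
    using prime_q by (simp add: prime_dvd_mult_iff)
  then have "[int d = int d'] (mod int q) \<or> [int d' = int e] (mod int q)"
    by (simp add: cong_iff_dvd_diff)
  then show ?thesis
    unfolding cong_def e_def by (auto simp flip: of_nat_mod)
qed

lemma euclid_value_mod:
  assumes N: "\<not> q dvd N" and d: "d dvd N" "d mod q = k" and k: "(k * k * n) mod q = N mod q"
  shows "(d + N div d) mod q = k \<odot> ((1 + n) mod q)"
proof -
  have "d \<odot> (N div d) = d \<odot> (k * n)"
    using d k mod_mult_left_eq [of d q "k * n"] by (simp add: mult.assoc)
  moreover have "\<not> q dvd d"
    using d(1) N dvd_trans by blast
  ultimately have cofactor: "(N div d) mod q = (k * n) mod q"
    using mult_mod_cancel by blast
  have "(d + N div d) mod q = (d mod q + (N div d) mod q) mod q"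
    by (rule mod_add_eq [symmetric])
  also have "\<dots> = (k + (k * n) mod q) mod q"
    using d(2) cofactor by simp
  also have "\<dots> = (k + k * n) mod q"
    by (rule mod_add_right_eq)
  also have "k + k * n = k * (1 + n)"
    by (simp only: distrib_left mult_1_right)
  finally show ?thesis
    by (simp only: mod_mult_right_eq)
qed

lemma card_divisor_residues_le:
  assumes n: "\<not> q dvd n" and V: "finite V" and value_in: "\<And>d. d dvd n \<Longrightarrow> (d + n div d) mod q \<in> V"
  shows "card (divisor_residues n) \<le> 2 * card V"
proof -
  define fibre where "fibre v = {d mod q | d. d dvd n \<and> (d + n div d) mod q = v}" for v
  have fibre_finite: "finite (fibre v)" for v
    by (rule finite_subset [of _ "{..<q}"]) (use two_le_q in \<open>auto simp: fibre_def\<close>)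
  have fibre_card: "card (fibre v) \<le> 2" for v
  proof (cases "fibre v = {}")
    case False
    then obtain d0 where d0: "d0 dvd n" "(d0 + n div d0) mod q = v"
      unfolding fibre_def by blast
    have "d mod q \<in> {d0 mod q, (n div d0) mod q}" if "d dvd n" "(d + n div d) mod q = v" for d
      using euclid_value_collision [OF n d0(1) that(1)] that(2) d0(2) by auto
    then have "card (fibre v) \<le> card {d0 mod q, (n div d0) mod q}"
      by (intro card_mono) (auto simp: fibre_def)
    also have "\<dots> \<le> 2"
      by (simp add: card_insert_if)
    finally show ?thesis .
  qed simp
  have "card (divisor_residues n) \<le> card (\<Union>v\<in>V. fibre v)"
    using value_in V fibre_finite by (intro card_mono) (auto simp: divisor_residues_def fibre_def)
  also have "\<dots> \<le> (\<Sum>v\<in>V. card (fibre v))"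
    by (rule card_UN_le [OF V])
  also have "\<dots> \<le> (\<Sum>v\<in>V. 2)"
    by (rule sum_mono) (rule fibre_card)
  finally show ?thesis
    by simp
qed

lemma divisor_value_outside_stabiliser:
  assumes n: "\<not> q dvd n" and small_primes: "\<And>p. prime p \<Longrightarrow> p < q \<Longrightarrow> p dvd n"
    and not_all: "divisor_residues n \<noteq> unit_residues"
  obtains d where "d dvd n" "(d + n div d) mod q \<notin> stabiliser (divisor_residues n)"
proof -
  let ?A = "divisor_residues n"
  have "2 * card (stabiliser ?A) < card ?A"
    using divisor_residues_subset [OF n] one_in_divisor_residues not_all
      prime_in_divisor_residues small_primes product_in_divisor_residues
    by (intro twice_card_stabiliser_less) auto
  moreover have "finite (stabiliser ?A)"
    by (rule finite_subset [of _ unit_residues]) (auto simp: stabiliser_def)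
  ultimately show ?thesis
    using card_divisor_residues_le [OF n] that by fastforce
qed

end

section \<open>Squares modulo an odd prime\<close>

locale odd_prime_modulus = prime_modulus +
  assumes two_less_q: "2 < q"
begin

definition squares :: "nat set" where
  "squares = (\<lambda>y. y \<odot> y) ` unit_residues"

lemma squares_subset: "squares \<subseteq> unit_residues"
  unfolding squares_def using mult_mod_in_unit_residues by blast

lemma square_in_squares: "y \<in> unit_residues \<Longrightarrow> y \<odot> y \<in> squares"
  unfolding squares_def by blast

lemma squares_iff_QuadRes:
  assumes x: "x \<in> unit_residues"
  shows "x \<in> squares \<longleftrightarrow> QuadRes (int q) (int x)"
proof
  assume "x \<in> squares"
  then obtain y where "y \<odot> y = x"
    unfolding squares_def by blast
  then have "[int y ^ 2 = int x] (mod int q)"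
    using x by (simp add: cong_def power2_eq_square flip: of_nat_mult of_nat_mod)
  then show "QuadRes (int q) (int x)"
    unfolding QuadRes_def by blast
next
  assume "QuadRes (int q) (int x)"
  then obtain y :: int where y: "[y ^ 2 = int x] (mod int q)"
    unfolding QuadRes_def by blast
  define y' where "y' = nat (y mod int q)"
  have y'_int: "int y' = y mod int q"
    using two_le_q by (simp add: y'_def)
  then have "[int y' ^ 2 = y ^ 2] (mod int q)"
    by (intro cong_pow) (simp add: cong_def)
  then have "[int (y' * y') = int x] (mod int q)"
    using y cong_trans by (simp add: power2_eq_square)
  then have "[y' * y' = x] (mod q)"
    by (simp only: cong_int_iff)
  then have sq: "y' \<odot> y' = x"
    using x by (simp add: cong_def)
  moreover have "y' < q"
    using y'_int two_le_q by (metis of_nat_less_iff pos_mod_bound of_nat_0_less_iff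
        less_le_trans pos2)
  moreover have "y' \<noteq> 0"
  proof
    assume "y' = 0"
    with sq x show False
      by (simp add: unit_residues_iff)
  qed
  ultimately show "x \<in> squares"
    unfolding squares_def by (auto simp: unit_residues_iff)
qed

lemma legendre_unit_residue:
  assumes "x \<in> unit_residues"
  shows "Legendre (int x) (int q) = (if x \<in> squares then 1 else -1)"
proof -
  have "\<not> [int x = 0] (mod int q)"
    using assms unit_residue_not_dvd by (simp add: cong_0_iff)
  then show ?thesis
    using squares_iff_QuadRes [OF assms] by (simp add: Legendre_def)
qed

lemma legendre_unit_residue_cong:
  assumes "x \<in> unit_residues"
  shows "[(if x \<in> squares then 1 else -1 :: int) = int x ^ ((q - 1) div 2)] (mod int q)"
  using euler_criterion [of q "int x"] prime_q two_less_q legendre_unit_residue [OF assms]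
  by simp

lemma squares_mult_iff:
  assumes a: "a \<in> unit_residues" and b: "b \<in> unit_residues"
  shows "a \<odot> b \<in> squares \<longleftrightarrow> (a \<in> squares \<longleftrightarrow> b \<in> squares)"
proof -
  define \<chi> :: "nat \<Rightarrow> int" where "\<chi> x = (if x \<in> squares then 1 else -1)" for x
  define h where "h = (q - 1) div 2"
  have "[int (a \<odot> b) ^ h = (int a * int b) ^ h] (mod int q)"
    by (intro cong_pow) (simp add: cong_def flip: of_nat_mult of_nat_mod)
  then have "[\<chi> (a \<odot> b) = \<chi> a * \<chi> b] (mod int q)"
    using legendre_unit_residue_cong [OF mult_mod_in_unit_residues [OF a b]]
      cong_mult [OF legendre_unit_residue_cong [OF a] legendre_unit_residue_cong [OF b]]
    unfolding \<chi>_def h_def power_mult_distrib by (metis (no_types, lifting) cong_sym cong_trans)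
  moreover have "\<not> int q dvd 2"
    using two_less_q by (auto dest: zdvd_imp_le)
  ultimately have "\<chi> (a \<odot> b) = \<chi> a * \<chi> b"
    unfolding \<chi>_def cong_iff_dvd_diff by (auto split: if_splits)
  then show ?thesis
    unfolding \<chi>_def by (auto split: if_splits)
qed

lemma one_in_squares: "1 \<in> squares"
  using square_in_squares [OF one_in_unit_residues] two_le_q by simp

lemma unit_subgroup_squares: "unit_subgroup squares"
  unfolding unit_subgroup_def
  using squares_subset squares_mult_iff one_in_squares by auto

lemma square_minus:
  assumes "y \<in> unit_residues"
  shows "(q - y) \<odot> (q - y) = y \<odot> y"
proof -
  obtain s where s: "q = y + s"
    using assms by (auto simp: unit_residues_iff dest: less_imp_add_positive)
  then have "(q - y) * (q - y) + (2 * y) * q = y * y + q * q"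
    by (simp add: algebra_simps)
  then have "((q - y) * (q - y) + (2 * y) * q) mod q = (y * y + q * q) mod q"
    by simp
  then show ?thesis
    by simp
qed

lemma twice_card_squares_le: "2 * card squares \<le> q - 1"
proof -
  obtain k where k: "q = 2 * k + 1"
    using prime_odd_nat [OF prime_q two_less_q] by (blast elim: oddE)
  have "squares \<subseteq> (\<lambda>y. y \<odot> y) ` {1..k}"
  proof
    fix x assume "x \<in> squares"
    then obtain y where y: "y \<in> unit_residues" "x = y \<odot> y"
      unfolding squares_def by blast
    then have "y \<in> {1..k} \<or> q - y \<in> {1..k}"
      using k unfolding unit_residues_iff by auto
    then show "x \<in> (\<lambda>y. y \<odot> y) ` {1..k}"
    proof
      assume "q - y \<in> {1..k}"
      then show ?thesis
        using y square_minus [OF y(1)] by (intro rev_image_eqI [of "q - y"]) auto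
    qed (use y in blast)
  qed
  then have "card squares \<le> card ((\<lambda>y. y \<odot> y) ` {1..k})"
    by (intro card_mono) auto
  also have "\<dots> \<le> k"
    using card_image_le [of "{1..k}" "\<lambda>y. y \<odot> y"] by simp
  finally show ?thesis
    using k by simp
qed

definition fourth_powers :: "nat set" where
  "fourth_powers = (\<lambda>y. y \<odot> y) ` squares"

lemma unit_subgroup_fourth_powers: "unit_subgroup fourth_powers"
  unfolding unit_subgroup_def
proof (intro conjI ballI)
  show "fourth_powers \<subseteq> unit_residues"
    using squares_subset mult_mod_in_unit_residues by (auto simp: fourth_powers_def)
  show "1 \<in> fourth_powers"
    using unit_subgroup_squares two_le_q by (force simp: fourth_powers_def unit_subgroup_def)
next
  fix a b assume "a \<in> fourth_powers" "b \<in> fourth_powers"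
  then obtain y y' where y: "y \<in> squares" "y' \<in> squares" "a = y \<odot> y" "b = y' \<odot> y'"
    unfolding fourth_powers_def by blast
  have "a \<odot> b = (y * y * (y' * y')) mod q"
    unfolding y(3,4) by (rule mod_mult_eq)
  also have "\<dots> = (y * y' * (y * y')) mod q"
    by (simp add: ac_simps)
  also have "\<dots> = (y \<odot> y') \<odot> (y \<odot> y')"
    by (rule mod_mult_eq [symmetric])
  finally have "a \<odot> b = (y \<odot> y') \<odot> (y \<odot> y')" .
  moreover have "y \<odot> y' \<in> squares"
    using unit_subgroup_squares y(1,2) unfolding unit_subgroup_def by blast
  ultimately show "a \<odot> b \<in> fourth_powers"
    unfolding fourth_powers_def by blast
qed

lemma square_not_fourth_power:
  assumes "q - 1 \<in> squares"
  obtains z where "z \<in> squares" "z \<notin> fourth_powers"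
proof -
  have "(q - 1) \<odot> (q - 1) = 1 \<odot> 1"
    using minus_one_squared two_le_q by simp
  have "\<not> inj_on (\<lambda>y. y \<odot> y) squares"
  proof
    assume inj: "inj_on (\<lambda>y. y \<odot> y) squares"
    have "q - 1 = 1"
      using inj_onD [OF inj \<open>(q - 1) \<odot> (q - 1) = 1 \<odot> 1\<close> assms one_in_squares] .
    then show False
      using two_less_q by simp
  qed
  then have "card fourth_powers < card squares"
    using card_image_le [of squares "\<lambda>y. y \<odot> y"] inj_on_iff_eq_card [of squares]
      finite_subset [OF squares_subset]
    unfolding fourth_powers_def by fastforce
  moreover have "finite fourth_powers"
    using unit_subgroup_fourth_powers finite_subset [of fourth_powers unit_residues]
    unfolding unit_subgroup_def by simp
  ultimately have "\<not> squares \<subseteq> fourth_powers"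
    using card_mono [of fourth_powers squares] by auto
  then show ?thesis
    using that by blast
qed

section \<open>Reachability\<close>

definition neg_residue :: "nat \<Rightarrow> nat" where
  "neg_residue n = (q - 1) \<odot> n"

lemma neg_residue_in_unit_residues: "\<not> q dvd n \<Longrightarrow> neg_residue n \<in> unit_residues"
  unfolding neg_residue_def
  using mult_mod_in_unit_residues [of "q - 1" "n mod q"] mod_in_unit_residues_iff two_le_q
  by (simp add: unit_residues_iff mod_mult_right_eq)

lemma neg_residue_mult: "neg_residue (n * r) = neg_residue n \<odot> r"
  unfolding neg_residue_def by (simp add: mod_mult_left_eq mult.assoc)

lemma divisor_residues_mult_eq_unit_residues:
  assumes "divisor_residues n = unit_residues" "\<not> q dvd n * r"
  shows "divisor_residues (n * r) = unit_residues"
  using assms divisor_residues_mono [of n r] divisor_residues_subset [of "n * r"] by blast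

text \<open>For \<open>d \<equiv> \<surd>(-n)\<close>, \<open>q\<close> divides \<open>d\<^sup>2 + n = d (d + n/d)\<close>.\<close>

lemma reachable_if_neg_square:
  assumes n: "\<not> q dvd n" and full: "divisor_residues n = unit_residues"
    and square: "neg_residue n \<in> squares"
  shows "reachable n"
proof -
  obtain y where y: "y \<in> unit_residues" "y \<odot> y = (q - 1) \<odot> n"
    using square unfolding squares_def neg_residue_def by auto
  have "y \<in> divisor_residues n"
    using y(1) full by simp
  then obtain d where d: "d dvd n" "d mod q = y"
    by (rule divisor_residuesE)
  have "(d * d + n) mod q = ((d * d) mod q + n) mod q"
    by (simp add: mod_add_left_eq)
  also have "(d * d) mod q = (q - 1) \<odot> n"
    using d(2) y(2) by (simp add: mod_mult_eq [of d q d, symmetric])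
  also have "((q - 1) \<odot> n + n) mod q = ((q - 1) * n + n) mod q"
    by (simp add: mod_add_left_eq)
  also have "(q - 1) * n + n = q * n"
    using two_le_q by (simp add: algebra_simps)
  finally have "q dvd d * d + n"
    by (simp add: dvd_eq_mod_eq_0)
  also have "d * d + n = d * (d + n div d)"
    using d(1) by (simp add: distrib_left)
  moreover have "\<not> q dvd d"
    using d(1) n dvd_trans by blast
  ultimately show ?thesis
    using reachableI [OF d(1)] prime_q by (simp add: prime_dvd_mult_iff)
qed

lemma reachable_if_nonsquare_prime_factor:
  assumes n: "\<not> q dvd n" and full: "divisor_residues n = unit_residues"
    and d: "d dvd n" and r: "prime r" "r dvd d + n div d" "r mod q \<notin> squares"
  shows "reachable n"
proof (cases "r = q")
  case True
  then show ?thesis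
    using reachableI [OF d] r(2) by simp
next
  case False
  then have r_unit: "r mod q \<in> unit_residues"
    using r(1) prime_q primes_dvd_imp_eq [of q r] mod_in_unit_residues_iff by auto
  show ?thesis
  proof (cases "neg_residue n \<in> squares")
    case True
    then show ?thesis
      using reachable_if_neg_square [OF n full] by simp
  next
    case False
    have nr: "\<not> q dvd n * r"
      using n r_unit not_dvd_mult mod_in_unit_residues_iff by simp
    have "neg_residue (n * r) = neg_residue n \<odot> (r mod q)"
      by (simp add: neg_residue_mult mod_mult_right_eq)
    then have "neg_residue (n * r) \<in> squares"
      using squares_mult_iff [OF neg_residue_in_unit_residues [OF n] r_unit] False r(3) by simp
    then have "reachable (n * r)"
      by (rule reachable_if_neg_square [OF nr divisor_residues_mult_eq_unit_residues [OF full nr]])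
    then show ?thesis
      using reachable_mult [OF _ r(1) d r(2)] by simp
  qed
qed

lemma reachable_if_nonsquare_value:
  assumes n: "\<not> q dvd n" and full: "divisor_residues n = unit_residues"
    and d: "d dvd n" "(d + n div d) mod q \<notin> squares"
  shows "reachable n"
proof -
  have "0 < d + n div d"
    using divisor_pos [OF n d(1)] by simp
  then obtain r where "prime r" "r dvd d + n div d" "r mod q \<notin> squares"
    by (rule unit_subgroup_prime_factor [OF unit_subgroup_squares _ d(2)])
  then show ?thesis
    using reachable_if_nonsquare_prime_factor [OF n full d(1)] by blast
qed

lemma square_is_euclid_value:
  assumes n: "\<not> q dvd n" and full: "divisor_residues n = unit_residues"
    and square_values: "\<And>d. d dvd n \<Longrightarrow> (d + n div d) mod q \<in> squares"
    and z: "z \<in> squares"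
  obtains d where "d dvd n" "(d + n div d) mod q = z"
proof -
  define V where "V = {(d + n div d) mod q | d. d dvd n}"
  have V: "V \<subseteq> squares" "finite squares"
    using square_values finite_subset [OF squares_subset] by (auto simp: V_def)
  have "\<And>d. d dvd n \<Longrightarrow> (d + n div d) mod q \<in> V"
    by (auto simp: V_def)
  then have "card (divisor_residues n) \<le> 2 * card V"
    by (rule card_divisor_residues_le [OF n finite_subset [OF V]])
  then have "card squares \<le> card V"
    using twice_card_squares_le full card_unit_residues by simp
  then have "card V = card squares"
    using card_mono [OF V(2,1)] by simp
  then have "V = squares"
    by (rule card_subset_eq [OF V(2,1)])
  then have "z \<in> V"
    using z by simp
  then obtain d where "d dvd n" "(d + n div d) mod q = z"
    unfolding V_def by blast
  then show ?thesis
    by (rule that)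
qed

lemma minus_one_square_if_square_values:
  assumes n: "\<not> q dvd n" and full: "divisor_residues n = unit_residues"
    and square_values: "\<And>d. d dvd n \<Longrightarrow> (d + n div d) mod q \<in> squares"
  shows "q - 1 \<in> squares"
proof -
  have minus_one: "q - 1 \<in> unit_residues"
    using two_less_q by (simp add: unit_residues_iff)
  then have "q - 1 \<in> divisor_residues n"
    using full by simp
  then obtain d where d: "d dvd n" "d mod q = q - 1"
    by (rule divisor_residuesE)
  have "((q - 1) * (q - 1) * n) mod q = n mod q"
    using minus_one_squared mod_mult_left_eq [of "(q - 1) * (q - 1)" q n] by simp
  then have "(d + n div d) mod q = (q - 1) \<odot> ((1 + n) mod q)"
    by (rule euclid_value_mod [OF n d])
  then have "(q - 1) \<odot> ((1 + n) mod q) \<in> squares"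
    using square_values [OF d(1)] by simp
  moreover have "(1 + n) mod q \<in> squares"
    using square_values [of 1] by simp
  ultimately show ?thesis
    using squares_mult_iff [OF minus_one] squares_subset by blast
qed

lemma reachable_if_nonsquare_root:
  assumes n: "\<not> q dvd n" and full: "divisor_residues n = unit_residues"
    and one: "(1 + n) mod q \<in> squares"
    and k: "k \<in> unit_residues" "k \<notin> squares" "k \<odot> k = r mod q"
  shows "reachable (n * r)"
proof -
  have "r mod q \<in> unit_residues"
    using mult_mod_in_unit_residues [OF k(1) k(1)] k(3) by simp
  then have nr: "\<not> q dvd n * r"
    using n mod_in_unit_residues_iff not_dvd_mult by blast
  have "k \<in> divisor_residues (n * r)"
    using k(1) divisor_residues_mult_eq_unit_residues [OF full nr] by simp
  then obtain d where d: "d dvd n * r" "d mod q = k"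
    by (rule divisor_residuesE)
  have "(k * k * n) mod q = (n * r) mod q"
    using k(3) mod_mult_left_eq [of "k * k" q n] mod_mult_left_eq [of r q n] by (simp add: mult.commute)
  then have cofactor_sum: "(d + (n * r) div d) mod q = k \<odot> ((1 + n) mod q)"
    by (rule euclid_value_mod [OF nr d])
  have "(d + (n * r) div d) mod q \<notin> squares"
    unfolding cofactor_sum using squares_mult_iff [OF k(1)] one k(2) squares_subset by blast
  then show ?thesis
    using reachable_if_nonsquare_value [OF nr divisor_residues_mult_eq_unit_residues [OF full nr] d(1)]
    by simp
qed

text \<open>Some value has a prime factor \<open>r\<close> whose square root \<open>k\<close> mod \<open>q\<close> is not a square; after
  appending \<open>r\<close>, a divisor \<open>d \<equiv> k\<close> gives the non-square value \<open>k (1 + n)\<close>.\<close>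

lemma reachable_if_square_values:
  assumes n: "\<not> q dvd n" and full: "divisor_residues n = unit_residues"
    and square_values: "\<And>d. d dvd n \<Longrightarrow> (d + n div d) mod q \<in> squares"
  shows "reachable n"
proof -
  obtain z where z: "z \<in> squares" "z \<notin> fourth_powers"
    by (rule square_not_fourth_power [OF minus_one_square_if_square_values [OF n full square_values]])
  obtain d where d: "d dvd n" "(d + n div d) mod q = z"
    by (rule square_is_euclid_value [OF n full square_values z(1)])
  have "0 < d + n div d"
    using divisor_pos [OF n d(1)] by simp
  then obtain r where r: "prime r" "r dvd d + n div d" "r mod q \<notin> fourth_powers"
    by (rule unit_subgroup_prime_factor [OF unit_subgroup_fourth_powers]) (use d z in simp)
  show ?thesis
  proof (cases "r mod q \<in> squares")
    case False
    then show ?thesis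
      using reachable_if_nonsquare_prime_factor [OF n full d(1) r(1,2)] by blast
  next
    case True
    then obtain k where k: "k \<in> unit_residues" "k \<odot> k = r mod q"
      unfolding squares_def by auto
    have "k \<notin> squares"
    proof
      assume "k \<in> squares"
      then have "k \<odot> k \<in> fourth_powers"
        unfolding fourth_powers_def by blast
      then show False
        using r(3) k(2) by simp
    qed
    then have "reachable (n * r)"
      using reachable_if_nonsquare_root [OF n full _ k(1)] k(2) square_values [of 1] by simp
    then show ?thesis
      using reachable_mult [OF _ r(1) d(1) r(2)] by simp
  qed
qed

lemma reachable_if_all_residues:
  assumes n: "\<not> q dvd n" and full: "divisor_residues n = unit_residues"
  shows "reachable n"
  using reachable_if_square_values [OF n full] reachable_if_nonsquare_value [OF n full] by blast

end

context prime_modulus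
begin

lemma reachable_if_extensions_reachable:
  assumes n: "\<not> q dvd n" and small_primes: "\<And>p. prime p \<Longrightarrow> p < q \<Longrightarrow> p dvd n"
    and not_all: "divisor_residues n \<noteq> unit_residues"
    and extensions: "\<And>r. prime r \<Longrightarrow> \<not> q dvd n * r \<Longrightarrow>
      divisor_residues n \<subset> divisor_residues (n * r) \<Longrightarrow> reachable (n * r)"
  shows "reachable n"
proof -
  let ?A = "divisor_residues n"
  obtain d where d: "d dvd n" "(d + n div d) mod q \<notin> stabiliser ?A"
    by (rule divisor_value_outside_stabiliser [OF n small_primes not_all])
  have "0 < d + n div d"
    using divisor_pos [OF n d(1)] by simp
  then obtain r where r: "prime r" "r dvd d + n div d" "r mod q \<notin> stabiliser ?A"
    by (rule unit_subgroup_prime_factor [OF unit_subgroup_stabiliser [OF divisor_residues_subset [OF n]] _ d(2)])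
  show ?thesis
  proof (cases "r = q")
    case True
    then show ?thesis
      using reachableI [OF d(1)] r(2) by simp
  next
    case False
    then have "\<not> q dvd n * r"
      using n r(1) prime_q primes_dvd_imp_eq [of q r] not_dvd_mult by auto
    then have "reachable (n * r)"
      using extensions [OF r(1)] divisor_residues_psubset [OF n r(1) False r(3)] by blast
    then show ?thesis
      using reachable_mult [OF _ r(1) d(1) r(2)] by simp
  qed
qed

lemma reachable_if_small_primes_dvd:
  assumes "\<not> q dvd n" "\<And>p. prime p \<Longrightarrow> p < q \<Longrightarrow> p dvd n"
  shows "reachable n"
  using assms
proof (induction "card unit_residues - card (divisor_residues n)" arbitrary: n rule: less_induct)
  case less
  note n = less.prems(1) and small_primes = less.prems(2)
  consider "q = 2" | "2 < q" "divisor_residues n = unit_residues" | "divisor_residues n \<noteq> unit_residues"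
    using two_le_q by linarith
  then show ?case
  proof cases
    case 1
    then show ?thesis
      using n reachableI [of 1 n] by simp
  next
    case 2
    interpret odd_prime_modulus q
      using 2(1) by unfold_locales
    show ?thesis
      using reachable_if_all_residues [OF n 2(2)] .
  next
    case 3
    show ?thesis
    proof (rule reachable_if_extensions_reachable [OF n small_primes 3])
      fix r assume r: "prime r" "\<not> q dvd n * r" "divisor_residues n \<subset> divisor_residues (n * r)"
      have "card (divisor_residues n) < card (divisor_residues (n * r))"
        by (rule psubset_card_mono [OF finite_divisor_residues r(3)])
      moreover have "card (divisor_residues (n * r)) \<le> card unit_residues"
        by (rule card_mono [OF finite_unit_residues divisor_residues_subset [OF r(2)]])
      ultimately show "reachable (n * r)"
        using less.hyps [of "n * r"] r(2) small_primes by auto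
    qed
  qed
qed

lemma reachable_prod:
  assumes P: "finite P" "\<forall>r\<in>P. prime r" "q \<notin> P"
    and small_primes: "\<And>p. prime p \<Longrightarrow> p < q \<Longrightarrow> p \<in> P"
  shows "reachable (\<Prod>P)"
proof (rule reachable_if_small_primes_dvd)
  show "\<not> q dvd \<Prod>P"
  proof
    assume "q dvd \<Prod>P"
    then obtain x where "x \<in> P" "q dvd x"
      using prime_dvd_prod_iff [OF P(1) prime_q] by auto
    then show False
      using P prime_q primes_dvd_imp_eq by blast
  qed
  show "p dvd \<Prod>P" if "prime p" "p < q" for p
    using small_primes [OF that] P(1) by (auto intro: dvd_prod_eqI)
qed

end

lemma least_prime_not_in:
  fixes P :: "nat set"
  assumes "finite P" "q = (LEAST r. prime r \<and> r \<notin> P)"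
  shows "prime q" "q \<notin> P" "\<And>p. prime p \<Longrightarrow> p < q \<Longrightarrow> p \<in> P"
proof -
  have "infinite ({r. prime r} - P)"
    by (rule Diff_infinite_finite [OF assms(1) primes_infinite])
  then have "{r. prime r} - P \<noteq> {}"
    by (rule infinite_imp_nonempty)
  then obtain r where "prime r" "r \<notin> P"
    by blast
  then show "prime q" "q \<notin> P"
    using LeastI [of "\<lambda>r. prime r \<and> r \<notin> P"] assms(2) by auto
  show "p \<in> P" if "prime p" "p < q" for p
    using not_less_Least [of p "\<lambda>r. prime r \<and> r \<notin> P"] that assms(2) by blast
qed

theorem proposition1:
  fixes P :: "nat set" and q :: nat
  assumes "finite P" and "\<forall>r\<in>P. prime r"
    and "q = (LEAST r. prime r \<and> r \<notin> P)"
  shows "\<exists>p. gen_euclid_seq P p \<and> (\<exists>j. p j = q)"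
proof -
  have q: "prime q" "q \<notin> P" and small_primes: "\<And>p. prime p \<Longrightarrow> p < q \<Longrightarrow> p \<in> P"
    using least_prime_not_in [OF assms(1) assms(3)] by auto
  interpret prime_modulus q
    using q(1) by unfold_locales
  obtain rs where rs: "euclid_chain (\<Prod>P) rs" "q \<in> set rs"
    using reachable_prod [OF assms(1,2) q(2) small_primes] unfolding reachable_def by blast
  let ?p = "euclid_completion (sorted_list_of_set P @ rs)"
  have "gen_euclid_seq P ?p"
    by (rule euclid_completion_gen_euclid_seq [OF assms(1,2) rs(1)])
  moreover have "\<exists>j. ?p j = q"
    using euclid_completion_mem rs(2) by simp
  ultimately show ?thesis
    by blast
qed

end
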